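(* Let $b\ge1$, $1\le a\le b$ be integers. Let $V:\mathbb{C}^2\to\mathcal{H}_j$ be the encoding isometry of a spin code that is $(\mathsf{BD}_{2b},\delta_a)$-covariant ($D^j(g)V=V\delta_a(g)$ for all $g\in\mathsf{BD}_{2b}$), and suppose the codewords $|\bar0\rangle=V|0\rangle$, $|\bar1\rangle=V|1\rangle$ are real (have real coefficients in the basis $|j,m\rangle$). Then for every $d\ge1$, the code satisfies the spin Knill–Laflamme conditions for all spherical tensors $T^k_q$ with $0\le k<d$ if and only if: (i) $\langle\bar0|T^k_q|\bar0\rangle=\langle\bar1|T^k_q|\bar1\rangle$ for all odd $k<d$ and all $0\le q\le k$ with $q\equiv0\pmod{2b}$; and (ii) $\langle\bar0|T^k_q|\bar1\rangle=0$ for all odd $k<d$ and all $-k\le q\le k$ with $q\equiv 2a-1\pmod{2b}$.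
   Context: $\mathcal{H}_j$ is the spin-$j$ irrep of $\mathrm{SU}(2)$ with orthonormal $J_z$-eigenbasis $|j,m\rangle$, $|m|\le j$, and $D^j(g)$ the action of $g$. Spherical tensors: $T^k_q=\sqrt{\tfrac{2k+1}{2j+1}}\sum_m C^{j\,m+q}_{k\,q,\,j\,m}|j,m+q\rangle\langle j,m|$, $0\le k\le 2j$, $-k\le q\le k$. The spin Knill–Laflamme conditions for $T^k_q$: $\langle\bar u|T^k_q|\bar v\rangle=c_{k,q}\delta_{uv}$ for $u,v\in\{0,1\}$ with $c_{k,q}$ independent of $u,v$. Notation: $\mathsf{X}=\begin{pmatrix}0&-i\\-i&0\end{pmatrix}$, $\mathsf{Z}=\mathrm{diag}(-i,i)$, $\mathsf{Ph}(\alpha)=\mathrm{diag}(e^{-i\alpha/2},e^{i\alpha/2})$, $\mathsf{BD}_{2b}=\langle\mathsf{X},\mathsf{Z},\mathsf{Ph}(\pi/b)\rangle$; $\delta_a$ ($1\le a\le b$) is the two-dimensional irrep of $\mathsf{BD}_{2b}$ with $\delta_a(\mathsf{X})=\mathsf{X}$, $\delta_a(\mathsf{Ph}(\pi/b))=\mathsf{Ph}(\pi/b)^{2a-1}$. *)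

theory Defs
  imports "HOL-Analysis.Analysis" "Jordan_Normal_Form.Matrix"
begin

(* Throughout, n = 2j (j the spin).  The Hilbert space H_j = C^(n+1); the basis
   vector with index r (0 <= r <= n) is |j, m> with m = r - j. *)

definition cinner :: "complex vec \<Rightarrow> complex vec \<Rightarrow> complex" where
  "cinner u v = (\<Sum>i<dim_vec u. cnj (u $ i) * v $ i)"

definition braket :: "complex vec \<Rightarrow> complex mat \<Rightarrow> complex vec \<Rightarrow> complex" where
  "braket u A v = cinner u (A *\<^sub>v v)"

(* Clebsch-Gordan coefficient C^{J M}_{j1 m1, j2 m2} = <j1 m1; j2 m2 | J M>
   (Condon-Shortley convention), via Racah's explicit formula.
   All arguments are DOUBLED (2 j1, 2 m1, 2 j2, 2 m2, 2 J, 2 M). *)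
definition cg_valid :: "int \<Rightarrow> int \<Rightarrow> int \<Rightarrow> int \<Rightarrow> int \<Rightarrow> int \<Rightarrow> bool" where
  "cg_valid j1 m1 j2 m2 J M \<longleftrightarrow>
     0 \<le> j1 \<and> 0 \<le> j2 \<and> 0 \<le> J \<and> M = m1 + m2 \<and>
     \<bar>m1\<bar> \<le> j1 \<and> \<bar>m2\<bar> \<le> j2 \<and> \<bar>M\<bar> \<le> J \<and>
     even (j1 + m1) \<and> even (j2 + m2) \<and> even (J + M) \<and>
     \<bar>j1 - j2\<bar> \<le> J \<and> J \<le> j1 + j2 \<and> even (j1 + j2 + J)"

definition ifact :: "int \<Rightarrow> real" where
  "ifact x = fact (nat x)"

definition clebsch_gordan :: "int \<Rightarrow> int \<Rightarrow> int \<Rightarrow> int \<Rightarrow> int \<Rightarrow> int \<Rightarrow> real" where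
  "clebsch_gordan j1 m1 j2 m2 J M =
     (if cg_valid j1 m1 j2 m2 J M then
        (let h = (\<lambda>x::int. x div 2) in
         sqrt (real_of_int (J + 1) * ifact (h (J + j1 - j2)) * ifact (h (J - j1 + j2))
                 * ifact (h (j1 + j2 - J)) / ifact (h (j1 + j2 + J) + 1))
       * sqrt (ifact (h (J + M)) * ifact (h (J - M)) * ifact (h (j1 - m1)) * ifact (h (j1 + m1))
                 * ifact (h (j2 - m2)) * ifact (h (j2 + m2)))
       * (\<Sum>s\<in>{0..nat (h (j1 + j2 - J))}.
            let t = int s;
                args = [t, h (j1 + j2 - J) - t, h (j1 - m1) - t, h (j2 + m2) - t,
                        h (J - j2 + m1) + t, h (J - j1 - m2) + t]
            in if (\<forall>x\<in>set args. 0 \<le> x)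
               then (-1) ^ s / (\<Prod>x\<leftarrow>args. ifact x) else 0))
      else 0)"

(* Spherical tensor T^k_q on H_j (n = 2j):
   T^k_q = sqrt((2k+1)/(2j+1)) sum_m C^{j m+q}_{k q, j m} |j,m+q><j,m| *)
definition spherical_tensor :: "nat \<Rightarrow> nat \<Rightarrow> int \<Rightarrow> complex mat" where
  "spherical_tensor n k q = mat (n + 1) (n + 1) (\<lambda>(r, c).
     complex_of_real (sqrt ((2 * real k + 1) / (real n + 1))
       * clebsch_gordan (2 * int k) (2 * q) (int n) (2 * int c - int n)
                        (int n) (2 * int r - int n)))"

(* The spin-j representation D^j of SU(2) (n = 2j), realised on the symmetric power
   Sym^n(C^2) with orthonormal basis x^r y^(n-r)/sqrt(r!(n-r)!) = |j, r - j>, where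
   x = |1/2,1/2> = e_0 and y = |1/2,-1/2> = e_1 of C^2, and g acts by
   x |-> g11 x + g21 y, y |-> g12 x + g22 y. *)
definition spin_rep :: "nat \<Rightarrow> complex mat \<Rightarrow> complex mat" where
  "spin_rep n g = mat (n + 1) (n + 1) (\<lambda>(r, c).
     complex_of_real (sqrt (fact r * fact (n - r) / (fact c * fact (n - c))))
     * (\<Sum>a\<in>{0..c}. if a \<le> r \<and> r - a \<le> n - c then
          of_nat (c choose a) * of_nat ((n - c) choose (r - a))
          * (g $$ (0,0)) ^ a * (g $$ (1,0)) ^ (c - a)
          * (g $$ (0,1)) ^ (r - a) * (g $$ (1,1)) ^ (n - c - (r - a))
        else 0))"

definition mat2 :: "complex \<Rightarrow> complex \<Rightarrow> complex \<Rightarrow> complex \<Rightarrow> complex mat" where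
  "mat2 a b c d = mat 2 2 (\<lambda>(r, s). if r = 0 then (if s = 0 then a else b)
                                           else (if s = 0 then c else d))"

definition matX :: "complex mat" where "matX = mat2 0 (- \<i>) (- \<i>) 0"
definition matZ :: "complex mat" where "matZ = mat2 (- \<i>) 0 0 \<i>"
definition matPh :: "real \<Rightarrow> complex mat" where
  "matPh \<alpha> = mat2 (cis (- \<alpha> / 2)) 0 0 (cis (\<alpha> / 2))"

(* Graph {(g, delta_a(g)) | g in BD_2b} of the two-dimensional irrep delta_a of
   BD_2b = <X, Z, Ph(pi/b)>: the subgroup of SU(2) x SU(2) generated by the pairs
   (X, X), (Ph(pi/b), Ph(pi/b)^(2a-1)), and (Z, Z^(2a-1)) (note Z = Ph(pi/b)^b). *)
inductive_set bd_graph :: "nat \<Rightarrow> nat \<Rightarrow> (complex mat \<times> complex mat) set"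
  for b a :: nat where
  one: "(1\<^sub>m 2, 1\<^sub>m 2) \<in> bd_graph b a"
| genX: "(matX, matX) \<in> bd_graph b a"
| genZ: "(matZ, matZ ^\<^sub>m (2 * a - 1)) \<in> bd_graph b a"
| genPh: "(matPh (pi / b), matPh (pi / b) ^\<^sub>m (2 * a - 1)) \<in> bd_graph b a"
| mult: "(g, h) \<in> bd_graph b a \<Longrightarrow> (g', h') \<in> bd_graph b a
          \<Longrightarrow> (g * g', h * h') \<in> bd_graph b a"

definition spin_KL :: "nat \<Rightarrow> complex mat \<Rightarrow> nat \<Rightarrow> int \<Rightarrow> bool" where
  "spin_KL n V k q \<longleftrightarrow> (\<exists>c. \<forall>u<2. \<forall>v<2.
     braket (col V u) (spherical_tensor n k q) (col V v) = (if u = v then c else 0))"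

end

(* The codewords being real, every matrix element <u|T^k_q|v> is the bilinear form
   G_q(f, g) = sum_(r,c) f_r T^k_q(r, c) g_c of their coefficient vectors x and y.
   Covariance under X swaps the codewords while reflecting m to -m, up to a phase whose square is 1
   (n = 2j turns out to be odd); with the Clebsch-Gordan symmetries under m -> -m and under exchange
   this gives G_q(y, y) = (-1)^(k+q) G_q(x, x), G_q(x, y) = (-1)^(k+q) G_q(x, y) and
   G_q(f, g) = (-1)^q G_(-q)(g, f). Covariance under Ph(pi/b) confines x to 2m = 2a-1 and y to
   2m = -(2a-1) modulo 4b, so T^k_q connects x with x or y with y only if q = 0 mod 2b, and
   x with y only if q = 2a-1 mod 2b. Then q is even, resp. odd, so for even k the Knill-Laflamme
   conditions hold automatically; for odd k what remains is (i) and (ii), the diagonal conditions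
   for q < 0 following from those for -q by the exchange symmetry. *)

theory Submission
  imports Defs
begin

section \<open>Symmetries of Clebsch-Gordan coefficients\<close>

definition racah_term :: "int \<Rightarrow> int list \<Rightarrow> real" where
  "racah_term t xs = (if \<forall>x\<in>set xs. 0 \<le> x then (-1) ^ nat t / (\<Prod>x\<leftarrow>xs. ifact x) else 0)"

definition racah_summand :: "int \<Rightarrow> int \<Rightarrow> int \<Rightarrow> int \<Rightarrow> int \<Rightarrow> int \<Rightarrow> real" where
  "racah_summand j1 m1 j2 m2 J t = racah_term t
     [t, (j1 + j2 - J) div 2 - t, (j1 - m1) div 2 - t, (j2 + m2) div 2 - t,
      (J - j2 + m1) div 2 + t, (J - j1 - m2) div 2 + t]"

definition cg_prefactor :: "int \<Rightarrow> int \<Rightarrow> int \<Rightarrow> int \<Rightarrow> int \<Rightarrow> int \<Rightarrow> real" where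
  "cg_prefactor j1 m1 j2 m2 J M =
     sqrt (real_of_int (J + 1) * ifact ((J + j1 - j2) div 2) * ifact ((J - j1 + j2) div 2)
           * ifact ((j1 + j2 - J) div 2) / ifact ((j1 + j2 + J) div 2 + 1))
   * sqrt (ifact ((J + M) div 2) * ifact ((J - M) div 2) * ifact ((j1 - m1) div 2)
           * ifact ((j1 + m1) div 2) * ifact ((j2 - m2) div 2) * ifact ((j2 + m2) div 2))"

lemma clebsch_gordan_racah:
  assumes "cg_valid j1 m1 j2 m2 J M"
  shows "clebsch_gordan j1 m1 j2 m2 J M = cg_prefactor j1 m1 j2 m2 J M *
     (\<Sum>t = 0..(j1 + j2 - J) div 2. racah_summand j1 m1 j2 m2 J t)"
proof -
  let ?z = "(j1 + j2 - J) div 2"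
  have "(\<Sum>s = 0..nat ?z. let t = int s;
        args = [t, ?z - t, (j1 - m1) div 2 - t, (j2 + m2) div 2 - t,
                (J - j2 + m1) div 2 + t, (J - j1 - m2) div 2 + t]
      in if \<forall>x\<in>set args. 0 \<le> x then (-1) ^ s / (\<Prod>x\<leftarrow>args. ifact x) else 0)
      = (\<Sum>s = 0..nat ?z. racah_summand j1 m1 j2 m2 J (int s))"
    by (rule sum.cong) (simp_all add: racah_summand_def racah_term_def Let_def)
  also have "\<dots> = (\<Sum>t \<in> int ` {0..nat ?z}. racah_summand j1 m1 j2 m2 J t)"
    by (simp add: sum.reindex)
  also have "int ` {0..nat ?z} = {0..?z}"
    using assms by (simp add: image_int_atLeastAtMost cg_valid_def)
  finally show ?thesis
    using assms unfolding clebsch_gordan_def cg_prefactor_def by (simp add: Let_def)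
qed

lemma clebsch_gordan_invalid: "\<not> cg_valid j1 m1 j2 m2 J M \<Longrightarrow> clebsch_gordan j1 m1 j2 m2 J M = 0"
  by (simp add: clebsch_gordan_def)

lemma racah_term_mset_eq:
  assumes "mset xs = mset ys" "t \<in> set xs" "t' \<in> set xs"
  shows "racah_term t xs = (-1) powi (t - t') * racah_term t' ys"
proof -
  have sets: "set xs = set ys" and prods: "(\<Prod>x\<leftarrow>xs. ifact x) = (\<Prod>x\<leftarrow>ys. ifact x)"
    using assms(1) by (metis set_mset_mset, metis mset_map prod_mset_prod_list)
  have "(-1) ^ nat t = (-1) powi (t - t') * (-1::real) ^ nat t'" if "0 \<le> t" "0 \<le> t'"
    using that by (simp add: power_int_minus_left minus_one_power_iff even_nat_iff)
  then show ?thesis using assms(2,3) by (auto simp: racah_term_def sets prods)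
qed

lemma racah_summand_nonzero_bounds:
  assumes "racah_summand j1 m1 j2 m2 J t \<noteq> 0"
  shows "0 \<le> t" "t \<le> (j1 + j2 - J) div 2" "t \<le> (j1 - m1) div 2" "- ((J - j2 + m1) div 2) \<le> t"
  using assms by (auto simp: racah_summand_def racah_term_def split: if_splits)

lemma racah_summand_neg:
  assumes "even (j1 + j2 - J)"
  shows "racah_summand j1 (-m1) j2 (-m2) J t
    = (-1) powi ((j1 + j2 - J) div 2) * racah_summand j1 m1 j2 m2 J ((j1 + j2 - J) div 2 - t)"
proof -
  define z where "z = (j1 + j2 - J) div 2"
  have shifted: "(j1 - m1) div 2 - (z - t) = (J - j2 - m1) div 2 + t"
    "(j2 + m2) div 2 - (z - t) = (J - j1 + m2) div 2 + t"
    "(J - j2 + m1) div 2 + (z - t) = (j1 + m1) div 2 - t"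
    "(J - j1 - m2) div 2 + (z - t) = (j2 - m2) div 2 - t"
    using assms unfolding z_def by presburger+
  have "racah_summand j1 (-m1) j2 (-m2) J t
      = (-1) powi (t - (z - t)) * racah_summand j1 m1 j2 m2 J (z - t)"
    unfolding racah_summand_def z_def[symmetric]
    by (rule racah_term_mset_eq) (simp_all add: shifted add_mset_commute)
  moreover have "(-1::real) powi (t - (z - t)) = (-1) powi z"
    by (simp add: power_int_minus_left)
  ultimately show ?thesis unfolding z_def by simp
qed

lemma racah_summand_exchange:
  assumes "even m1"
  shows "racah_summand K (-m1) N (m1 + m2) N t
    = (-1) powi (m1 div 2) * racah_summand K m1 N m2 N (t - m1 div 2)"
proof -
  define p where "p = m1 div 2"
  have "racah_summand K (-m1) N (m1 + m2) N t = racah_term t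
      [(N - N + m1) div 2 + (t - p), (K - m1) div 2 - (t - p), (K + N - N) div 2 - (t - p),
       (N + m2) div 2 - (t - p), t - p, (N - K - m2) div 2 + (t - p)]"
    unfolding racah_summand_def p_def
    by (intro arg_cong[where f = "racah_term t"] list.inject[THEN iffD2] conjI refl)
      (use assms in presburger)+
  also have "\<dots> = (-1) powi (t - (t - p)) * racah_summand K m1 N m2 N (t - p)"
    unfolding racah_summand_def by (rule racah_term_mset_eq) (simp_all add: add_mset_commute p_def)
  finally show ?thesis unfolding p_def by simp
qed

lemma clebsch_gordan_neg:
  "clebsch_gordan j1 (-m1) j2 (-m2) J (-M)
    = (-1) powi ((j1 + j2 - J) div 2) * clebsch_gordan j1 m1 j2 m2 J M"
proof (cases "cg_valid j1 m1 j2 m2 J M")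
  case False
  then have "\<not> cg_valid j1 (-m1) j2 (-m2) J (-M)" unfolding cg_valid_def by auto
  then show ?thesis using False by (simp add: clebsch_gordan_invalid)
next
  case True
  then have valid_neg: "cg_valid j1 (-m1) j2 (-m2) J (-M)" unfolding cg_valid_def by auto
  define z where "z = (j1 + j2 - J) div 2"
  have "even (j1 + j2 + J)" using True unfolding cg_valid_def by simp
  then have "even (j1 + j2 - J)" by presburger
  then have "(\<Sum>t = 0..z. racah_summand j1 (-m1) j2 (-m2) J t)
      = (-1) powi z * (\<Sum>t = 0..z. racah_summand j1 m1 j2 m2 J (z - t))"
    by (simp add: racah_summand_neg z_def sum_distrib_left)
  also have "(\<Sum>t = 0..z. racah_summand j1 m1 j2 m2 J (z - t))
      = (\<Sum>t = 0..z. racah_summand j1 m1 j2 m2 J t)"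
    by (rule sum.reindex_bij_witness[of _ "\<lambda>t. z - t" "\<lambda>t. z - t"]) auto
  moreover have "cg_prefactor j1 (-m1) j2 (-m2) J (-M) = cg_prefactor j1 m1 j2 m2 J M"
    unfolding cg_prefactor_def by (simp add: ac_simps)
  ultimately show ?thesis
    using clebsch_gordan_racah[OF True] clebsch_gordan_racah[OF valid_neg] z_def by simp
qed

text \<open>The symmetry trading \<open>(j\<^sub>2, m\<^sub>2)\<close> for \<open>(J, M)\<close>, in the case \<open>j\<^sub>2 = J\<close> where its
  factor \<open>sqrt ((2J + 1) / (2j\<^sub>2 + 1))\<close> is 1.\<close>

lemma clebsch_gordan_exchange:
  assumes "even m1"
  shows "clebsch_gordan K m1 N m2 N M = (-1) powi (m1 div 2) * clebsch_gordan K (-m1) N M N m2"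
proof (cases "cg_valid K m1 N m2 N M")
  case False
  then have "\<not> cg_valid K (-m1) N M N m2" unfolding cg_valid_def by auto
  then show ?thesis using False by (simp add: clebsch_gordan_invalid)
next
  case True
  then have valid_exch: "cg_valid K (-m1) N M N m2" and M: "M = m1 + m2"
    unfolding cg_valid_def by auto
  define z where "z = (K + N - N) div 2"
  define p where "p = m1 div 2"
  have "(\<Sum>t = 0..z. racah_summand K (-m1) N M N t)
      = (-1) powi p * (\<Sum>t = 0..z. racah_summand K m1 N m2 N (t - p))"
    by (simp add: racah_summand_exchange[OF assms] M p_def sum_distrib_left)
  also have "(\<Sum>t = 0..z. racah_summand K m1 N m2 N (t - p))
      = (\<Sum>t = -p..z - p. racah_summand K m1 N m2 N t)"
    by (rule sum.reindex_bij_witness[of _ "\<lambda>t. t + p" "\<lambda>t. t - p"]) auto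
  also have "\<dots> = (\<Sum>t = 0..z. racah_summand K m1 N m2 N t)"
  proof -
    have "(K - m1) div 2 = z - p" "(N - N + m1) div 2 = p"
      unfolding z_def p_def using assms by presburger+
    then have "racah_summand K m1 N m2 N t = 0" if "t \<notin> {0..z} \<inter> {-p..z - p}" for t
      using that racah_summand_nonzero_bounds[of K m1 N m2 N t] unfolding z_def by fastforce
    then show ?thesis by (intro sum.mono_neutral_cong) auto
  qed
  moreover have "cg_prefactor K (-m1) N M N m2 = cg_prefactor K m1 N m2 N M"
    unfolding cg_prefactor_def by (simp add: ac_simps)
  ultimately have "clebsch_gordan K (-m1) N M N m2 = (-1) powi p * clebsch_gordan K m1 N m2 N M"
    using clebsch_gordan_racah[OF True] clebsch_gordan_racah[OF valid_exch] z_def by simp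
  then show ?thesis unfolding p_def by simp
qed

section \<open>Spherical tensors and their bilinear forms\<close>

lemma spherical_tensor_entry:
  assumes "r \<le> n" "c \<le> n"
  shows "spherical_tensor n k q $$ (r, c) = complex_of_real (sqrt ((2 * real k + 1) / (real n + 1))
    * clebsch_gordan (2 * int k) (2 * q) (int n) (2 * int c - int n) (int n) (2 * int r - int n))"
  using assms unfolding spherical_tensor_def by simp

lemma spherical_tensor_reflect:
  assumes "r \<le> n" "c \<le> n"
  shows "spherical_tensor n k q $$ (n - r, n - c) = (-1) ^ k * spherical_tensor n k (-q) $$ (r, c)"
proof -
  have "clebsch_gordan (2 * int k) (2 * q) (int n) (2 * int (n - c) - int n)
        (int n) (2 * int (n - r) - int n)
      = clebsch_gordan (2 * int k) (- (2 * - q)) (int n) (- (2 * int c - int n))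
        (int n) (- (2 * int r - int n))"
    using assms by (simp add: of_nat_diff)
  also have "\<dots> = (-1) ^ k * clebsch_gordan (2 * int k) (2 * - q) (int n) (2 * int c - int n)
      (int n) (2 * int r - int n)"
    by (subst clebsch_gordan_neg) (simp add: power_int_of_nat)
  finally show ?thesis
    using assms by (simp add: spherical_tensor_entry)
qed

lemma spherical_tensor_transpose:
  assumes "r \<le> n" "c \<le> n"
  shows "spherical_tensor n k q $$ (r, c) = (-1) powi q * spherical_tensor n k (-q) $$ (c, r)"
  using assms
    clebsch_gordan_exchange[of "2 * q" "2 * int k" "int n" "2 * int c - int n" "2 * int r - int n"]
  by (simp add: spherical_tensor_entry)

lemma spherical_tensor_nonzero_imp:
  assumes "r \<le> n" "c \<le> n" "spherical_tensor n k q $$ (r, c) \<noteq> 0"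
  shows "int r = int c + q"
proof -
  have "clebsch_gordan (2 * int k) (2 * q) (int n) (2 * int c - int n)
      (int n) (2 * int r - int n) \<noteq> 0"
    using assms by (auto simp: spherical_tensor_entry)
  then have "cg_valid (2 * int k) (2 * q) (int n) (2 * int c - int n) (int n) (2 * int r - int n)"
    using clebsch_gordan_invalid by blast
  then show ?thesis unfolding cg_valid_def by simp
qed

definition tensor_form :: "nat \<Rightarrow> nat \<Rightarrow> int \<Rightarrow> (nat \<Rightarrow> complex) \<Rightarrow> (nat \<Rightarrow> complex) \<Rightarrow> complex" where
  "tensor_form n k q f g = (\<Sum>r\<le>n. \<Sum>c\<le>n. f r * spherical_tensor n k q $$ (r, c) * g c)"

lemma tensor_form_swap: "tensor_form n k q f g = (-1) powi q * tensor_form n k (-q) g f"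
proof -
  have "tensor_form n k q f g
      = (\<Sum>r\<le>n. \<Sum>c\<le>n. (-1) powi q * (g c * spherical_tensor n k (-q) $$ (c, r) * f r))"
    unfolding tensor_form_def
    by (intro sum.cong refl) (simp add: spherical_tensor_transpose[of _ n _ k q])
  also have "\<dots> = (-1) powi q * tensor_form n k (-q) g f"
    unfolding tensor_form_def by (subst sum.swap) (simp add: sum_distrib_left)
  finally show ?thesis .
qed

lemma tensor_form_reflect:
  assumes "\<And>r. r \<le> n \<Longrightarrow> f r = \<alpha> * f' (n - r)" "\<And>c. c \<le> n \<Longrightarrow> g c = \<beta> * g' (n - c)"
  shows "tensor_form n k q f g = \<alpha> * \<beta> * (-1) ^ k * tensor_form n k (-q) f' g'"
proof -
  have reflect: "(\<Sum>r\<le>n. h r) = (\<Sum>r\<le>n. h (n - r))" for h :: "nat \<Rightarrow> complex"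
    by (rule sum.reindex_bij_witness[of _ "\<lambda>r. n - r" "\<lambda>r. n - r"]) auto
  have "tensor_form n k q f g
      = (\<Sum>r\<le>n. \<Sum>c\<le>n. f (n - r) * spherical_tensor n k q $$ (n - r, n - c) * g (n - c))"
    unfolding tensor_form_def by (subst reflect, subst reflect) (rule refl)
  also have "\<dots> = (\<Sum>r\<le>n. \<Sum>c\<le>n.
      \<alpha> * \<beta> * (-1) ^ k * (f' r * spherical_tensor n k (-q) $$ (r, c) * g' c))"
    by (intro sum.cong refl) (simp add: spherical_tensor_reflect assms)
  also have "\<dots> = \<alpha> * \<beta> * (-1) ^ k * tensor_form n k (-q) f' g'"
    unfolding tensor_form_def by (simp add: sum_distrib_left)
  finally show ?thesis .
qed

lemma tensor_form_nonzero_dvd: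
  fixes m e e' :: int
  assumes "\<And>r. r \<le> n \<Longrightarrow> f r \<noteq> 0 \<Longrightarrow> m dvd (int n - 2 * int r + e)"
    and "\<And>c. c \<le> n \<Longrightarrow> g c \<noteq> 0 \<Longrightarrow> m dvd (int n - 2 * int c + e')"
    and "tensor_form n k q f g \<noteq> 0"
  shows "m dvd (2 * q + e' - e)"
proof -
  obtain r c where rc: "r \<le> n" "c \<le> n" and "f r * spherical_tensor n k q $$ (r, c) * g c \<noteq> 0"
    using assms(3) unfolding tensor_form_def by (metis (no_types, lifting) atMost_iff sum.neutral)
  then have "f r \<noteq> 0" "g c \<noteq> 0" "int r = int c + q"
    using spherical_tensor_nonzero_imp[OF rc] by auto
  have "m dvd (int n - 2 * int c + e') - (int n - 2 * int r + e)"
  proof (rule dvd_diff)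
    show "m dvd (int n - 2 * int c + e')" by (rule assms(2)) fact+
    show "m dvd (int n - 2 * int r + e)" by (rule assms(1)) fact+
  qed
  also have "(int n - 2 * int c + e') - (int n - 2 * int r + e) = 2 * q + e' - e"
    using \<open>int r = int c + q\<close> by simp
  finally show ?thesis .
qed

section \<open>Covariance under \<open>X\<close> and \<open>Ph(\<pi>/b)\<close>\<close>

lemma index_mult_mat_sum:
  assumes "A \<in> carrier_mat m p" "B \<in> carrier_mat p q" "i < m" "j < q"
  shows "(A * B) $$ (i, j) = (\<Sum>l<p. A $$ (i, l) * B $$ (l, j))"
  using assms by (simp add: scalar_prod_def atLeast0LessThan)

lemma mat2_carrier: "mat2 a b c d \<in> carrier_mat 2 2"
  by (simp add: mat2_def)

lemma mat2_index [simp]: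
  "mat2 a b c d $$ (0, 0) = a" "mat2 a b c d $$ (0, Suc 0) = b"
  "mat2 a b c d $$ (Suc 0, 0) = c" "mat2 a b c d $$ (Suc 0, Suc 0) = d"
  by (simp_all add: mat2_def)

lemma sum_lessThan_2: "(\<Sum>l<2. f l) = f 0 + f (1::nat)"
  by (simp add: numeral_2_eq_2)

lemma mult_mat2_index:
  assumes "V \<in> carrier_mat m 2" "r < m"
  shows "(V * mat2 a b c d) $$ (r, 0) = V $$ (r, 0) * a + V $$ (r, 1) * c"
    and "(V * mat2 a b c d) $$ (r, 1) = V $$ (r, 0) * b + V $$ (r, 1) * d"
  using assms by (simp_all add: index_mult_mat_sum[OF _ mat2_carrier] sum_lessThan_2)

lemma matPh_mult: "matPh x * matPh y = matPh (x + y)"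
proof (rule eq_matI)
  fix i j assume "i < dim_row (matPh (x + y))" "j < dim_col (matPh (x + y))"
  then have "i = 0 \<or> i = 1" "j = 0 \<or> j = 1" by (auto simp: matPh_def mat2_def)
  then show "(matPh x * matPh y) $$ (i, j) = matPh (x + y) $$ (i, j)"
    by (auto simp: index_mult_mat_sum[OF mat2_carrier mat2_carrier] matPh_def sum_lessThan_2
        cis_mult add_divide_distrib diff_divide_distrib)
qed (simp_all add: matPh_def mat2_def)

lemma matPh_power: "matPh x ^\<^sub>m k = matPh (real k * x)"
proof (induction k)
  case 0
  show ?case by (rule eq_matI) (auto simp: matPh_def mat2_def less_2_cases_iff)
next
  case (Suc k)
  then show ?case by (simp add: matPh_mult algebra_simps)
qed

lemma spin_rep_carrier: "spin_rep n g \<in> carrier_mat (n + 1) (n + 1)"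
  by (simp add: spin_rep_def)

lemma spin_rep_diagonal_index:
  assumes "g $$ (1, 0) = 0" "g $$ (0, 1) = 0" "r \<le> n" "c \<le> n"
  shows "spin_rep n g $$ (r, c) = (if r = c then g $$ (0, 0) ^ r * g $$ (1, 1) ^ (n - r) else 0)"
proof -
  have "(\<Sum>a = 0..c. if a \<le> r \<and> r - a \<le> n - c then
          of_nat (c choose a) * of_nat ((n - c) choose (r - a))
          * (g $$ (0,0)) ^ a * (g $$ (1,0)) ^ (c - a)
          * (g $$ (0,1)) ^ (r - a) * (g $$ (1,1)) ^ (n - c - (r - a)) else 0)
      = (\<Sum>a = 0..c. if a = c \<and> r = c then g $$ (0, 0) ^ r * g $$ (1, 1) ^ (n - r) else 0)"
    using assms(1,2) by (intro sum.cong refl) auto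
  then show ?thesis
    using assms(3,4) by (simp add: spin_rep_def)
qed

lemma spin_rep_antidiagonal_index:
  assumes "g $$ (0, 0) = 0" "g $$ (1, 1) = 0" "r \<le> n" "c \<le> n"
  shows "spin_rep n g $$ (r, c) = (if r = n - c then g $$ (1, 0) ^ c * g $$ (0, 1) ^ r else 0)"
proof -
  have "(\<Sum>a = 0..c. if a \<le> r \<and> r - a \<le> n - c then
          of_nat (c choose a) * of_nat ((n - c) choose (r - a))
          * (g $$ (0,0)) ^ a * (g $$ (1,0)) ^ (c - a)
          * (g $$ (0,1)) ^ (r - a) * (g $$ (1,1)) ^ (n - c - (r - a)) else 0)
      = (\<Sum>a = 0..c. if a = 0 \<and> r = n - c then g $$ (1, 0) ^ c * g $$ (0, 1) ^ r else 0)"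
    using assms by (intro sum.cong refl) auto
  then show ?thesis
    using assms(3,4) by (simp add: spin_rep_def)
qed

lemma spin_rep_matX_index:
  assumes "r \<le> n" "c \<le> n"
  shows "spin_rep n matX $$ (r, c) = (if r = n - c then (- \<i>) ^ n else 0)"
  using assms by (simp add: spin_rep_antidiagonal_index matX_def flip: power_add)

lemma spin_rep_matPh_index:
  assumes "r \<le> n" "c \<le> n"
  shows "spin_rep n (matPh x) $$ (r, c)
    = (if r = c then cis ((real n - 2 * real r) * x / 2) else 0)"
proof -
  have "cis (- x / 2) ^ r * cis (x / 2) ^ (n - r)
      = cis (real r * (- x / 2) + real (n - r) * (x / 2))"
    by (simp only: Complex.DeMoivre cis_mult)
  also have "real r * (- x / 2) + real (n - r) * (x / 2) = (real n - 2 * real r) * x / 2"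
    using assms by (simp add: of_nat_diff field_simps)
  finally show ?thesis
    using assms by (auto simp: spin_rep_diagonal_index matPh_def)
qed

lemma cis_eq_imp_dvd:
  fixes A B :: int and N :: nat
  assumes "0 < N" "cis (of_int A * pi / N) = cis (of_int B * pi / N)"
  shows "2 * int N dvd A - B"
proof -
  have "cis (of_int (A - B) * pi / N) = 1"
    using assms(2) by (simp flip: cis_divide add: left_diff_distrib diff_divide_distrib)
  then obtain m :: int where "of_int (A - B) * pi / N = of_int (2 * m) * pi"
    by (auto simp: cis_conv_exp exp_eq_1)
  then have "pi * real_of_int (A - B) = pi * real_of_int (2 * int N * m)"
    using assms(1) by (simp add: field_simps)
  then have "real_of_int (A - B) = real_of_int (2 * int N * m)"
    by simp
  then have "A - B = 2 * int N * m"
    by (simp only: of_int_eq_iff)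
  then show ?thesis by (rule dvdI)
qed

lemma spin_rep_matX_mult_index:
  assumes "V \<in> carrier_mat (n + 1) m" "r \<le> n" "u < m"
  shows "(spin_rep n matX * V) $$ (r, u) = (- \<i>) ^ n * V $$ (n - r, u)"
proof -
  have "(spin_rep n matX * V) $$ (r, u) = (\<Sum>l<n + 1. spin_rep n matX $$ (r, l) * V $$ (l, u))"
    using assms by (intro index_mult_mat_sum[OF spin_rep_carrier]) auto
  also have "\<dots> = (\<Sum>l<n + 1. if l = n - r then (- \<i>) ^ n * V $$ (l, u) else 0)"
    using assms(2) by (intro sum.cong refl) (auto simp: spin_rep_matX_index)
  finally show ?thesis by simp
qed

lemma spin_rep_matPh_mult_index:
  assumes "V \<in> carrier_mat (n + 1) m" "r \<le> n" "u < m"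
  shows "(spin_rep n (matPh x) * V) $$ (r, u) = cis ((real n - 2 * real r) * x / 2) * V $$ (r, u)"
proof -
  have "(spin_rep n (matPh x) * V) $$ (r, u)
      = (\<Sum>l<n + 1. spin_rep n (matPh x) $$ (r, l) * V $$ (l, u))"
    using assms by (intro index_mult_mat_sum[OF spin_rep_carrier]) auto
  also have "\<dots>
      = (\<Sum>l<n + 1. if l = r then cis ((real n - 2 * real r) * x / 2) * V $$ (l, u) else 0)"
    using assms(2) by (intro sum.cong refl) (auto simp: spin_rep_matPh_index)
  finally show ?thesis using assms(2) by simp
qed

lemma matX_covariant_columns:
  assumes V: "V \<in> carrier_mat (n + 1) 2" and cov: "spin_rep n matX * V = V * matX" and "r \<le> n"
  shows "V $$ (r, 1) = \<i> * (- \<i>) ^ n * V $$ (n - r, 0)"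
    and "V $$ (r, 0) = \<i> * (- \<i>) ^ n * V $$ (n - r, 1)"
proof -
  have "(- \<i>) ^ n * V $$ (n - r, u) = (V * matX) $$ (r, u)" if "u < 2" for u
    using spin_rep_matX_mult_index[OF V \<open>r \<le> n\<close> that] cov by simp
  then have "(- \<i>) ^ n * V $$ (n - r, 0) = - \<i> * V $$ (r, 1)"
    and "(- \<i>) ^ n * V $$ (n - r, 1) = - \<i> * V $$ (r, 0)"
    using mult_mat2_index[OF V, of r] \<open>r \<le> n\<close> by (simp_all add: matX_def)
  then show "V $$ (r, 1) = \<i> * (- \<i>) ^ n * V $$ (n - r, 0)"
    and "V $$ (r, 0) = \<i> * (- \<i>) ^ n * V $$ (n - r, 1)"
    by (simp_all add: algebra_simps)
qed

lemma matPh_covariant_support: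
  fixes b e :: nat
  assumes V: "V \<in> carrier_mat (n + 1) 2" and "0 < b"
    and cov: "spin_rep n (matPh (pi / b)) * V = V * matPh (pi / b) ^\<^sub>m e" and "r \<le> n"
  shows "V $$ (r, 0) \<noteq> 0 \<Longrightarrow> 4 * int b dvd int n - 2 * int r + int e"
    and "V $$ (r, 1) \<noteq> 0 \<Longrightarrow> 4 * int b dvd int n - 2 * int r - int e"
proof -
  define \<phi> where "\<phi> A = of_int A * pi / real (2 * b)" for A :: int
  have phase:
    "(V * matPh (real e * (pi / b))) $$ (r, u) = cis (\<phi> (int n - 2 * int r)) * V $$ (r, u)"
    if "u < 2" for u
  proof -
    have "(V * matPh (real e * (pi / b))) $$ (r, u) = (spin_rep n (matPh (pi / b)) * V) $$ (r, u)"
      using cov by (simp add: matPh_power)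
    also have "\<dots> = cis ((real n - 2 * real r) * (pi / b) / 2) * V $$ (r, u)"
      by (rule spin_rep_matPh_mult_index[OF V \<open>r \<le> n\<close> that])
    also have "(real n - 2 * real r) * (pi / b) / 2 = \<phi> (int n - 2 * int r)"
      by (simp add: \<phi>_def)
    finally show ?thesis .
  qed
  have dvd: "4 * int b dvd int n - 2 * int r - B" if "cis (\<phi> (int n - 2 * int r)) = cis (\<phi> B)" for B
    using cis_eq_imp_dvd[of "2 * b"] \<open>0 < b\<close> that unfolding \<phi>_def by simp
  show "4 * int b dvd int n - 2 * int r + int e" if "V $$ (r, 0) \<noteq> 0"
  proof -
    have "cis (\<phi> (int n - 2 * int r)) = cis (\<phi> (- int e))"
      using phase[of 0] mult_mat2_index(1)[OF V, of r] \<open>r \<le> n\<close> that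
      by (simp add: matPh_def \<phi>_def mult_ac)
    then show ?thesis using dvd by fastforce
  qed
  show "4 * int b dvd int n - 2 * int r - int e" if "V $$ (r, 1) \<noteq> 0"
  proof -
    have "cis (\<phi> (int n - 2 * int r)) = cis (\<phi> (int e))"
      using phase[of 1] mult_mat2_index(2)[OF V, of r] \<open>r \<le> n\<close> that
      by (simp add: matPh_def \<phi>_def mult_ac)
    then show ?thesis using dvd by fastforce
  qed
qed

lemma unit_col_nonzero_entry:
  assumes "V \<in> carrier_mat (n + 1) m" "u < m" "cinner (col V u) (col V u) = 1"
  obtains r where "r \<le> n" "V $$ (r, u) \<noteq> 0"
proof -
  have "\<exists>r\<le>n. V $$ (r, u) \<noteq> 0"
  proof (rule ccontr)
    assume "\<not> (\<exists>r\<le>n. V $$ (r, u) \<noteq> 0)"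
    then have "cinner (col V u) (col V u) = 0"
      using assms(1,2) unfolding cinner_def by (intro sum.neutral) auto
    then show False using assms(3) by simp
  qed
  then show ?thesis using that by blast
qed

lemma braket_real_col_eq_tensor_form:
  assumes V: "V \<in> carrier_mat (n + 1) m" and "u < m" "v < m"
    and real: "\<And>r. r \<le> n \<Longrightarrow> V $$ (r, u) \<in> \<real>"
  shows "braket (col V u) (spherical_tensor n k q) (col V v)
    = tensor_form n k q (\<lambda>r. V $$ (r, u)) (\<lambda>c. V $$ (c, v))"
proof -
  have "(spherical_tensor n k q *\<^sub>v col V v) $ r
      = (\<Sum>c\<le>n. spherical_tensor n k q $$ (r, c) * V $$ (c, v))"
    if "r \<le> n" for r
    using that V \<open>v < m\<close>
    by (simp add: spherical_tensor_def scalar_prod_def atLeast0LessThan lessThan_Suc_atMost)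
  moreover have "cnj (V $$ (r, u)) = V $$ (r, u)" if "r \<le> n" for r
    using real[OF that] by (simp add: Reals_cnj_iff)
  ultimately show ?thesis
    using V \<open>u < m\<close>
    by (simp add: braket_def cinner_def tensor_form_def lessThan_Suc_atMost sum_distrib_left
        mult.assoc)
qed

section \<open>Covariant codewords\<close>

lemma dvd_double_cancel:
  fixes B w :: int
  assumes "4 * B dvd 2 * w"
  shows "2 * B dvd w"
proof -
  have "2 * (2 * B) dvd 2 * w" using assms by simp
  then show ?thesis by (simp only: dvd_times_left_cancel_iff)
qed

text \<open>\<open>x\<close> and \<open>y\<close> are the coefficient vectors of the two codewords, index \<open>r\<close> standing
  for \<open>m = r - n/2\<close>: the support conditions say that \<open>x\<close> lives on \<open>2m = 2a - 1\<close> and \<open>y\<close> on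
  \<open>2m = -(2a - 1)\<close> modulo \<open>4b\<close>.\<close>

locale covariant_codewords =
  fixes n b a :: nat and x y :: "nat \<Rightarrow> complex" and s :: complex
  assumes reflect_x: "r \<le> n \<Longrightarrow> x r = s * y (n - r)"
    and reflect_y: "r \<le> n \<Longrightarrow> y r = s * x (n - r)"
    and s_squared: "s * s = 1"
    and support_x: "r \<le> n \<Longrightarrow> x r \<noteq> 0 \<Longrightarrow> 4 * int b dvd int n - 2 * int r + (2 * int a - 1)"
    and support_y: "r \<le> n \<Longrightarrow> y r \<noteq> 0 \<Longrightarrow> 4 * int b dvd int n - 2 * int r + (1 - 2 * int a)"
begin

lemma tensor_form_yy:
  "tensor_form n k q y y = (-1) ^ k * (-1) powi q * tensor_form n k q x x"
proof -
  have "tensor_form n k q y y = s * s * (-1) ^ k * tensor_form n k (-q) x x"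
    by (rule tensor_form_reflect) (erule reflect_y)+
  also have "tensor_form n k (-q) x x = (-1) powi q * tensor_form n k q x x"
    by (subst tensor_form_swap) (simp add: power_int_minus_one_minus)
  finally show ?thesis by (simp add: s_squared)
qed

lemma tensor_form_xy:
  "tensor_form n k q x y = (-1) ^ k * (-1) powi q * tensor_form n k q x y"
proof -
  have "tensor_form n k q x y = s * s * (-1) ^ k * tensor_form n k (-q) y x"
    by (rule tensor_form_reflect) (erule reflect_x, erule reflect_y)
  also have "tensor_form n k (-q) y x = (-1) powi q * tensor_form n k q x y"
    by (subst tensor_form_swap) (simp add: power_int_minus_one_minus)
  finally show ?thesis by (simp add: s_squared)
qed

lemma tensor_form_xx_nonzero_dvd:
  assumes "tensor_form n k q x x \<noteq> 0"
  shows "2 * int b dvd q"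
proof -
  have "4 * int b dvd 2 * q + (2 * int a - 1) - (2 * int a - 1)"
    by (rule tensor_form_nonzero_dvd[OF support_x support_x assms])
  then show ?thesis by (intro dvd_double_cancel) simp
qed

lemma tensor_form_yy_nonzero_dvd:
  assumes "tensor_form n k q y y \<noteq> 0"
  shows "2 * int b dvd q"
proof -
  have "4 * int b dvd 2 * q + (1 - 2 * int a) - (1 - 2 * int a)"
    by (rule tensor_form_nonzero_dvd[OF support_y support_y assms])
  then show ?thesis by (intro dvd_double_cancel) simp
qed

lemma tensor_form_xy_nonzero_dvd:
  assumes "tensor_form n k q x y \<noteq> 0"
  shows "2 * int b dvd q - (2 * int a - 1)"
proof -
  have "4 * int b dvd 2 * q + (1 - 2 * int a) - (2 * int a - 1)"
    by (rule tensor_form_nonzero_dvd[OF support_x support_y assms])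
  also have "2 * q + (1 - 2 * int a) - (2 * int a - 1) = 2 * (q - (2 * int a - 1))"
    by simp
  finally show ?thesis by (rule dvd_double_cancel)
qed

lemma tensor_form_xy_vanish_iff:
  "(\<forall>q. \<bar>q\<bar> \<le> int k \<longrightarrow> tensor_form n k q x y = 0) \<longleftrightarrow>
   (odd k \<longrightarrow> (\<forall>q. - int k \<le> q \<longrightarrow> q \<le> int k
      \<longrightarrow> q mod (2 * int b) = (2 * int a - 1) mod (2 * int b) \<longrightarrow> tensor_form n k q x y = 0))"
proof (intro iffI allI impI)
  fix q assume vanish: "odd k \<longrightarrow> (\<forall>q. - int k \<le> q \<longrightarrow> q \<le> int k
      \<longrightarrow> q mod (2 * int b) = (2 * int a - 1) mod (2 * int b) \<longrightarrow> tensor_form n k q x y = 0)"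
    and q: "\<bar>q\<bar> \<le> int k"
  show "tensor_form n k q x y = 0"
  proof (rule ccontr)
    assume nonzero: "tensor_form n k q x y \<noteq> 0"
    then have dvd: "2 * int b dvd q - (2 * int a - 1)"
      by (rule tensor_form_xy_nonzero_dvd)
    have "(2::int) dvd 2 * int b" by simp
    then have "2 dvd q - (2 * int a - 1)" using dvd by (rule dvd_trans)
    then have "odd q" by presburger
    show False
    proof (cases "even k")
      case True
      then show False using tensor_form_xy[of k q] nonzero \<open>odd q\<close> by simp
    next
      case False
      moreover have "q mod (2 * int b) = (2 * int a - 1) mod (2 * int b)"
        using dvd by (simp add: mod_eq_dvd_iff)
      ultimately show False
        using vanish nonzero q by (simp add: abs_le_iff)
    qed
  qed
qed (simp add: abs_le_iff)

lemma tensor_form_diagonal_eq_iff: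
  "(\<forall>q. \<bar>q\<bar> \<le> int k \<longrightarrow> tensor_form n k q x x = tensor_form n k q y y) \<longleftrightarrow>
   (odd k \<longrightarrow> (\<forall>q. 0 \<le> q \<longrightarrow> q \<le> int k
      \<longrightarrow> q mod (2 * int b) = 0 \<longrightarrow> tensor_form n k q x x = tensor_form n k q y y))"
proof (intro iffI allI impI)
  fix q assume eq: "odd k \<longrightarrow> (\<forall>q. 0 \<le> q \<longrightarrow> q \<le> int k
      \<longrightarrow> q mod (2 * int b) = 0 \<longrightarrow> tensor_form n k q x x = tensor_form n k q y y)"
    and q: "\<bar>q\<bar> \<le> int k"
  show "tensor_form n k q x x = tensor_form n k q y y"
  proof (cases "tensor_form n k q x x = 0 \<and> tensor_form n k q y y = 0")
    case False
    then have dvd: "2 * int b dvd q"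
      using tensor_form_xx_nonzero_dvd tensor_form_yy_nonzero_dvd by blast
    have "(2::int) dvd 2 * int b" by simp
    then have "even q" using dvd by (rule dvd_trans)
    show ?thesis
    proof (cases "even k")
      case True
      then show ?thesis using tensor_form_yy[of k q] \<open>even q\<close> by simp
    next
      case False
      have "tensor_form n k \<bar>q\<bar> x x = tensor_form n k \<bar>q\<bar> y y"
        using eq False q dvd by simp
      then show ?thesis
        using tensor_form_swap[of n k q x x] tensor_form_swap[of n k q y y]
        by (cases "0 \<le> q") simp_all
    qed
  qed simp
qed simp

lemma tensor_form_yx_vanish:
  assumes "\<forall>q. \<bar>q\<bar> \<le> int k \<longrightarrow> tensor_form n k q x y = 0" "\<bar>q\<bar> \<le> int k"
  shows "tensor_form n k q y x = 0"
  using assms(1)[rule_format, of "- q"] assms(2) tensor_form_swap[of n k q y x] by simp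

lemma knill_laflamme_tensor_forms_iff:
  "(\<forall>k q. k < d \<longrightarrow> k \<le> n \<longrightarrow> \<bar>q\<bar> \<le> int k \<longrightarrow>
      tensor_form n k q x x = tensor_form n k q y y
      \<and> tensor_form n k q x y = 0 \<and> tensor_form n k q y x = 0)
   \<longleftrightarrow>
   ((\<forall>k q. k < d \<longrightarrow> k \<le> n \<longrightarrow> odd k \<longrightarrow> 0 \<le> q \<longrightarrow> q \<le> int k
        \<longrightarrow> q mod (2 * int b) = 0 \<longrightarrow> tensor_form n k q x x = tensor_form n k q y y)
    \<and>
    (\<forall>k q. k < d \<longrightarrow> k \<le> n \<longrightarrow> odd k \<longrightarrow> - int k \<le> q \<longrightarrow> q \<le> int k
        \<longrightarrow> q mod (2 * int b) = (2 * int a - 1) mod (2 * int b) \<longrightarrow> tensor_form n k q x y = 0))"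
  (is "?forms \<longleftrightarrow> ?diagonal \<and> ?off_diagonal")
proof
  assume forms: ?forms
  show "?diagonal \<and> ?off_diagonal"
  proof (intro conjI allI impI)
    fix k q
    assume "k < d" "k \<le> n" "odd k" "0 \<le> q" "q \<le> int k" "q mod (2 * int b) = 0"
    then show "tensor_form n k q x x = tensor_form n k q y y"
      using forms[rule_format, of k q] by (simp add: abs_le_iff)
  next
    fix k q
    assume "k < d" "k \<le> n" "odd k" "- int k \<le> q" "q \<le> int k"
      "q mod (2 * int b) = (2 * int a - 1) mod (2 * int b)"
    then show "tensor_form n k q x y = 0"
      using forms[rule_format, of k q] by (simp add: abs_le_iff)
  qed
next
  assume "?diagonal \<and> ?off_diagonal"
  then have diagonal: ?diagonal and off_diagonal: ?off_diagonal by (rule conjunct1, rule conjunct2)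
  show ?forms
  proof (intro allI impI)
    fix k q
    assume k: "k < d" "k \<le> n" and q: "\<bar>q\<bar> \<le> int k"
    have "odd k \<longrightarrow> (\<forall>q. 0 \<le> q \<longrightarrow> q \<le> int k
        \<longrightarrow> q mod (2 * int b) = 0 \<longrightarrow> tensor_form n k q x x = tensor_form n k q y y)"
      using diagonal k by simp
    then have "\<forall>q. \<bar>q\<bar> \<le> int k \<longrightarrow> tensor_form n k q x x = tensor_form n k q y y"
      by (simp only: tensor_form_diagonal_eq_iff)
    moreover have "odd k \<longrightarrow> (\<forall>q. - int k \<le> q \<longrightarrow> q \<le> int k
        \<longrightarrow> q mod (2 * int b) = (2 * int a - 1) mod (2 * int b) \<longrightarrow> tensor_form n k q x y = 0)"
      using off_diagonal k by simp
    then have xy: "\<forall>q. \<bar>q\<bar> \<le> int k \<longrightarrow> tensor_form n k q x y = 0"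
      by (simp only: tensor_form_xy_vanish_iff)
    ultimately show "tensor_form n k q x x = tensor_form n k q y y
        \<and> tensor_form n k q x y = 0 \<and> tensor_form n k q y x = 0"
      using q tensor_form_yx_vanish[OF xy q] by simp
  qed
qed

end

lemma covariant_codewords_columns:
  fixes V :: "complex mat"
  assumes "1 \<le> b" "1 \<le> a"
    and V: "V \<in> carrier_mat (n + 1) 2"
    and unit: "cinner (col V 0) (col V 0) = 1"
    and covariant: "\<forall>(g, h) \<in> bd_graph b a. spin_rep n g * V = V * h"
  shows "covariant_codewords n b a (\<lambda>r. V $$ (r, 0)) (\<lambda>r. V $$ (r, 1)) (\<i> * (- \<i>) ^ n)"
proof -
  have covX: "spin_rep n matX * V = V * matX"
    using covariant bd_graph.genX[of b a] by fastforce
  have covPh: "spin_rep n (matPh (pi / b)) * V = V * matPh (pi / b) ^\<^sub>m (2 * a - 1)"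
    using covariant bd_graph.genPh[of b a] by fastforce
  have exponent: "int (2 * a - 1) = 2 * int a - 1"
    using \<open>1 \<le> a\<close> by simp
  have support_x: "4 * int b dvd int n - 2 * int r + (2 * int a - 1)"
    if "r \<le> n" "V $$ (r, 0) \<noteq> 0" for r
    using matPh_covariant_support(1)[OF V _ covPh that(1)] that(2) \<open>1 \<le> b\<close> exponent by simp
  have support_y: "4 * int b dvd int n - 2 * int r + (1 - 2 * int a)"
    if "r \<le> n" "V $$ (r, 1) \<noteq> 0" for r
  proof -
    have "4 * int b dvd int n - 2 * int r - (2 * int a - 1)"
      using matPh_covariant_support(2)[OF V _ covPh that(1)] that(2) \<open>1 \<le> b\<close> exponent by simp
    then show ?thesis by (simp add: algebra_simps)
  qed
  obtain r where "r \<le> n" "V $$ (r, 0) \<noteq> 0"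
    using unit_col_nonzero_entry[OF V _ unit] by auto
  then have "4 * int b dvd int n - 2 * int r + (2 * int a - 1)"
    by (rule support_x)
  then have "2 dvd int n - 2 * int r + (2 * int a - 1)"
    by (rule dvd_trans[rotated]) simp
  then have "odd n" by presburger
  have "(\<i> * (- \<i>) ^ n) * (\<i> * (- \<i>) ^ n) = (\<i> * \<i>) * ((- \<i>) * (- \<i>)) ^ n"
    by (simp only: power_mult_distrib mult_ac)
  also have "\<dots> = 1"
    using \<open>odd n\<close> by simp
  finally show ?thesis
    using matX_covariant_columns[OF V covX] support_x support_y by unfold_locales auto
qed

theorem theorem2:
  fixes n :: nat and b a d :: nat and V :: "complex mat"
  assumes hb: "1 \<le> b" and ha: "1 \<le> a" "a \<le> b"
    and hV: "V \<in> carrier_mat (n + 1) 2"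
    and isometry: "\<forall>u<2. \<forall>v<2. cinner (col V u) (col V v) = (if u = v then 1 else 0)"
    and covariant: "\<forall>(g, h) \<in> bd_graph b a. spin_rep n g * V = V * h"
    and real_codewords: "\<forall>i<n + 1. \<forall>u<2. V $$ (i, u) \<in> \<real>"
    and hd: "1 \<le> d"
  shows "(\<forall>k q. k < d \<longrightarrow> k \<le> n \<longrightarrow> \<bar>q\<bar> \<le> int k \<longrightarrow> spin_KL n V k q)
     \<longleftrightarrow>
     ((\<forall>k q. k < d \<longrightarrow> k \<le> n \<longrightarrow> odd k \<longrightarrow> 0 \<le> q \<longrightarrow> q \<le> int k
          \<longrightarrow> q mod (2 * int b) = 0 \<longrightarrow>
          braket (col V 0) (spherical_tensor n k q) (col V 0)
            = braket (col V 1) (spherical_tensor n k q) (col V 1))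
      \<and>
      (\<forall>k q. k < d \<longrightarrow> k \<le> n \<longrightarrow> odd k \<longrightarrow> - int k \<le> q \<longrightarrow> q \<le> int k
          \<longrightarrow> q mod (2 * int b) = (2 * int a - 1) mod (2 * int b) \<longrightarrow>
          braket (col V 0) (spherical_tensor n k q) (col V 1) = 0))"
proof -
  interpret covariant_codewords n b a "\<lambda>r. V $$ (r, 0)" "\<lambda>r. V $$ (r, 1)" "\<i> * (- \<i>) ^ n"
    using covariant_codewords_columns[OF hb ha(1) hV _ covariant] isometry by simp
  have braket: "braket (col V u) (spherical_tensor n k q) (col V v)
      = tensor_form n k q (\<lambda>r. V $$ (r, u)) (\<lambda>r. V $$ (r, v))" if "u < 2" "v < 2" for u v k q
    using braket_real_col_eq_tensor_form[OF hV that] real_codewords \<open>u < 2\<close> by simp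
  have "spin_KL n V k q \<longleftrightarrow>
      tensor_form n k q (\<lambda>r. V $$ (r, 0)) (\<lambda>r. V $$ (r, 0))
        = tensor_form n k q (\<lambda>r. V $$ (r, 1)) (\<lambda>r. V $$ (r, 1))
      \<and> tensor_form n k q (\<lambda>r. V $$ (r, 0)) (\<lambda>r. V $$ (r, 1)) = 0
      \<and> tensor_form n k q (\<lambda>r. V $$ (r, 1)) (\<lambda>r. V $$ (r, 0)) = 0" for k q
    unfolding spin_KL_def less_2_cases_iff by (auto simp: braket)
  then show ?thesis
    using knill_laflamme_tensor_forms_iff[of d] by (simp add: braket)
qed

end
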